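(* Let $(Y,\nu,S)$ be a mixing Gibbs system with $Y\subseteq A^{\mathbb{Z}}$, and let $\mathcal{P}$ be the time-zero partition of $Y$ (by the value of the coordinate $y_0$). Then for every integer $p\ge0$, \[\sup_{N\ge1}\mathrm{I}_\nu\big(\mathcal{P}^{[-p;N+p)};\mathcal{P}^{[-N-p;p)}\big)<\infty.\]
   Context: A mixing Gibbs system: $A$ finite, $Y\subseteq A^{\mathbb{Z}}$ a topologically mixing subshift of finite type, $S$ the left shift, and $\nu$ the Gibbs measure associated to a Hölder continuous potential on $Y$ (Hölder w.r.t. $d(a,a')=\sum_n2^{-|n|}1_{\{a_n\ne a'_n\}}$). For $F\subseteq\mathbb{Z}$ finite, $\mathcal{P}^F=\bigvee_{n\in F}S^{-n}\mathcal{P}$; $[a;b)=\{a,\dots,b-1\}$. $\mathrm{I}_\nu$ denotes mutual information of partitions. *)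

theory Defs
  imports "HOL-Probability.Probability"
begin

definition shift :: "(int \<Rightarrow> 'a) \<Rightarrow> (int \<Rightarrow> 'a)" where
  "shift y = (\<lambda>n. y (n + 1))"

definition seq_space :: "(int \<Rightarrow> 'a) measure" where
  "seq_space = PiM UNIV (\<lambda>_. count_space UNIV)"

definition cyl :: "'a list \<Rightarrow> int \<Rightarrow> (int \<Rightarrow> 'a) set" where
  "cyl w m = {y. \<forall>i<length w. y (m + int i) = w ! i}"

definition is_SFT :: "(int \<Rightarrow> 'a::finite) set \<Rightarrow> bool" where
  "is_SFT Y \<longleftrightarrow> (\<exists>(L::nat) (F :: 'a list set).
      Y = {y. \<forall>m::int. map (\<lambda>i. y (m + int i)) [0..<L] \<notin> F})"

text \<open>Topological mixing of a subshift, stated on cylinders (a base of the topology):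
  for any two cylinders meeting Y, the n-th shift of one meets the other for all large n.\<close>
definition top_mixing :: "(int \<Rightarrow> 'a) set \<Rightarrow> bool" where
  "top_mixing Y \<longleftrightarrow> (\<forall>u v. Y \<inter> cyl u 0 \<noteq> {} \<longrightarrow> Y \<inter> cyl v 0 \<noteq> {} \<longrightarrow>
      (\<exists>N::nat. \<forall>n\<ge>N. Y \<inter> cyl u 0 \<inter> cyl v (int n) \<noteq> {}))"

definition seq_dist :: "(int \<Rightarrow> 'a) \<Rightarrow> (int \<Rightarrow> 'a) \<Rightarrow> real" where
  "seq_dist a a' = infsum (\<lambda>n::int. (1/2) ^ nat \<bar>n\<bar> * (if a n \<noteq> a' n then 1 else 0)) UNIV"

definition holder_on :: "(int \<Rightarrow> 'a) set \<Rightarrow> ((int \<Rightarrow> 'a) \<Rightarrow> real) \<Rightarrow> bool" where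
  "holder_on Y \<phi> \<longleftrightarrow> (\<exists>C \<alpha>. C \<ge> 0 \<and> 0 < \<alpha> \<and> \<alpha> \<le> 1 \<and>
      (\<forall>y\<in>Y. \<forall>y'\<in>Y. \<bar>\<phi> y - \<phi> y'\<bar> \<le> C * seq_dist y y' powr \<alpha>))"

definition gibbs_measure :: "(int \<Rightarrow> 'a) set \<Rightarrow> ((int \<Rightarrow> 'a) \<Rightarrow> real) \<Rightarrow> (int \<Rightarrow> 'a) measure \<Rightarrow> bool" where
  "gibbs_measure Y \<phi> \<nu> \<longleftrightarrow>
     sets \<nu> = sets seq_space \<and> prob_space \<nu> \<and>
     (AE y in \<nu>. y \<in> Y) \<and>
     (\<forall>B\<in>sets \<nu>. emeasure \<nu> (shift -` B \<inter> space \<nu>) = emeasure \<nu> B) \<and>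
     (\<exists>c P. c \<ge> 1 \<and> (\<forall>y\<in>Y. \<forall>n::nat. n \<ge> 1 \<longrightarrow>
        (let g = exp (- real n * P + (\<Sum>k<n. \<phi> ((shift ^^ k) y)));
             m = measure \<nu> (cyl (map (\<lambda>i. y (int i)) [0..<n]) 0)
         in g / c \<le> m \<and> m \<le> c * g)))"

text \<open>The partition P^F = \<Or>_{n\<in>F} S^{-n} P, for P the time-zero partition:
  its atoms are the sets {y. \<forall>n\<in>F. y n = w n}.\<close>
definition join_part :: "int set \<Rightarrow> (int \<Rightarrow> 'a) set set" where
  "join_part F = (\<lambda>w. {y. \<forall>n\<in>F. y n = w n}) ` (F \<rightarrow>\<^sub>E UNIV)"

definition mutual_info_part :: "'b measure \<Rightarrow> 'b set set \<Rightarrow> 'b set set \<Rightarrow> real" where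
  "mutual_info_part \<nu> \<P> \<Q> = (\<Sum>p\<in>\<P>. \<Sum>q\<in>\<Q>.
      let r = measure \<nu> (p \<inter> q) in
      if r = 0 then 0 else r * ln (r / (measure \<nu> p * measure \<nu> q)))"

abbreviation int_interval :: "int \<Rightarrow> int \<Rightarrow> int set" where
  "int_interval a b \<equiv> {a..<b}"

end

theory Submission
  imports Defs
begin

(* Translating the defining estimate nu[y_0..y_{n-1}] ~ exp(-nP + S_n phi(y))
   by shift-invariance, every interval atom satisfies
     | ln nu(atom [a;b) y) - (S_{[a;b)} phi(y) - (b-a) P) | <= ln c.
   For nested intervals [a;e) = [a;d) \<union> [b;e) with overlap [b;d), the Birkhoff sums
   over [a;b) and [b;e) cancel in  ln nu[a;e) - ln nu[b;e) - ln nu[a;d),  leaving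
   3 ln c + (d-b) P - S_{[b;d)} phi(y).  Since -phi is bounded above on Y (the Gibbs
   bound for single symbols), this is at most a constant K depending on the overlap
   length 2p only, not on N.  Finally, mutual information of two finite measurable
   partitions is bounded by any uniform upper bound for the logarithmic ratios
   ln (nu(U \<inter> V) / (nu U * nu V)) over cells U \<inter> V of positive measure.
   The file first develops the partition bound, then the combinatorics of the
   partitions join_part F, then the Gibbs estimates, and derives the theorem last. *)

section \<open>Mutual information of finite partitions\<close>

definition finite_partition :: "'b measure \<Rightarrow> 'b set set \<Rightarrow> bool" where
  "finite_partition M \<P> \<longleftrightarrow> finite \<P> \<and> \<P> \<subseteq> sets M \<and> disjoint \<P> \<and> \<Union>\<P> = space M"

lemma sum_measure_Int_partition:
  assumes "finite_measure M" "finite_partition M \<P>" "A \<in> sets M"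
  shows "(\<Sum>U\<in>\<P>. measure M (A \<inter> U)) = measure M A"
proof -
  interpret finite_measure M by (rule assms(1))
  have P: "finite \<P>" "\<P> \<subseteq> sets M" "disjoint \<P>" "\<Union>\<P> = space M"
    using assms(2) by (simp_all add: finite_partition_def)
  have "measure M (\<Union>U\<in>\<P>. A \<inter> U) = (\<Sum>U\<in>\<P>. measure M (A \<inter> U))"
  proof (rule measure_finite_Union)
    show "disjoint_family_on ((\<inter>) A) \<P>"
      using P(3) unfolding disjoint_family_on_def disjoint_def by blast
  qed (use P assms(3) in \<open>auto simp: emeasure_eq_measure\<close>)
  moreover have "(\<Union>U\<in>\<P>. A \<inter> U) = A"
    using P(4) assms(3) sets.sets_into_space by blast
  ultimately show ?thesis by simp
qed

lemma mutual_info_part_le: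
  assumes "prob_space M"
    and P: "finite_partition M \<P>" and Q: "finite_partition M \<Q>"
    and bound: "\<And>U V. U \<in> \<P> \<Longrightarrow> V \<in> \<Q> \<Longrightarrow> 0 < measure M (U \<inter> V) \<Longrightarrow>
                  ln (measure M (U \<inter> V) / (measure M U * measure M V)) \<le> K"
  shows "mutual_info_part M \<P> \<Q> \<le> K"
proof -
  interpret prob_space M by (rule assms(1))
  have cell: "(let r = measure M (U \<inter> V) in
                if r = 0 then 0 else r * ln (r / (measure M U * measure M V)))
              \<le> K * measure M (U \<inter> V)" if "U \<in> \<P>" "V \<in> \<Q>" for U V
  proof (cases "measure M (U \<inter> V) = 0")
    case False
    then have "0 < measure M (U \<inter> V)" using measure_nonneg[of M "U \<inter> V"] by linarith
    with bound[OF that] show ?thesis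
      by (simp add: Let_def mult.commute mult_left_mono)
  qed (simp add: Let_def)
  have "mutual_info_part M \<P> \<Q> \<le> (\<Sum>U\<in>\<P>. \<Sum>V\<in>\<Q>. K * measure M (U \<inter> V))"
    unfolding mutual_info_part_def by (intro sum_mono cell)
  also have "\<dots> = K * (\<Sum>U\<in>\<P>. measure M U)"
  proof -
    have "(\<Sum>V\<in>\<Q>. measure M (U \<inter> V)) = measure M U" if "U \<in> \<P>" for U
      using sum_measure_Int_partition[OF finite_measure_axioms Q] that P
      by (auto simp: finite_partition_def)
    then show ?thesis by (simp add: sum_distrib_left[symmetric])
  qed
  also have "\<dots> = K"
    using sum_measure_Int_partition[OF finite_measure_axioms P, of "space M"] P prob_space
    by (simp add: finite_partition_def Int_absorb1 sets.sets_into_space subset_iff)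
  finally show ?thesis .
qed

section \<open>The partitions \<open>\<P>\<^sup>F\<close>\<close>

definition translate :: "int \<Rightarrow> (int \<Rightarrow> 'a) \<Rightarrow> (int \<Rightarrow> 'a)" where
  "translate a y = (\<lambda>n. y (n + a))"

definition atom :: "int set \<Rightarrow> (int \<Rightarrow> 'a) \<Rightarrow> (int \<Rightarrow> 'a) set" where
  "atom F w = {z. \<forall>n\<in>F. z n = w n}"

lemma funpow_shift: "(shift ^^ k) y = translate (int k) y"
  by (induction k) (auto simp: translate_def shift_def algebra_simps)

lemma translate_translate: "translate k (translate a y) = translate (a + k) y"
  by (simp add: translate_def algebra_simps)

lemma space_seq_space: "space seq_space = UNIV"
  by (simp add: seq_space_def space_PiM)

lemma atom_in_sets: "finite F \<Longrightarrow> atom F w \<in> sets seq_space"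
proof -
  assume "finite F"
  have coord: "{x \<in> space seq_space. x n = w n} \<in> sets seq_space" for n
  proof -
    have "(\<lambda>x. x n) \<in> measurable seq_space (count_space UNIV)"
      unfolding seq_space_def by (rule measurable_component_singleton) simp
    from measurable_sets[OF this, of "{w n}"] show ?thesis
      by (simp add: space_seq_space vimage_def)
  qed
  have "{x \<in> space seq_space. \<forall>n\<in>F. x n = w n} \<in> sets seq_space"
    using coord by (rule sets.sets_Collect_finite_All[OF _ \<open>finite F\<close>])
  then show ?thesis by (simp add: atom_def space_seq_space)
qed

lemma cyl_eq_atom: "cyl w m = atom {m..<m + int (length w)} (\<lambda>j. w ! nat (j - m))"
proof (intro set_eqI iffI)
  fix z assume z: "z \<in> cyl w m"
  show "z \<in> atom {m..<m + int (length w)} (\<lambda>j. w ! nat (j - m))"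
  proof (unfold atom_def, intro CollectI ballI)
    fix n assume n: "n \<in> {m..<m + int (length w)}"
    define i where "i = nat (n - m)"
    have "i < length w" "m + int i = n" using n by (auto simp: i_def)
    with z show "z n = w ! nat (n - m)" unfolding cyl_def i_def[symmetric] by blast
  qed
qed (auto simp: cyl_def atom_def)

lemma cyl_in_sets: "cyl w m \<in> sets seq_space"
  unfolding cyl_eq_atom by (rule atom_in_sets) simp

lemma atom_interval_eq_cyl:
  "atom {a..<a + int n} y = cyl (map (\<lambda>i. translate a y (int i)) [0..<n]) a"
  unfolding cyl_eq_atom by (auto simp: atom_def translate_def)

lemma atom_Un: "atom F y \<inter> atom G y = atom (F \<union> G) y"
  unfolding atom_def by auto

lemma atom_in_join_part: "atom F y \<in> join_part F"
proof -
  have "join_part F = atom F ` (F \<rightarrow>\<^sub>E UNIV)" unfolding join_part_def atom_def by simp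
  moreover have "atom F y = atom F (restrict y F)" by (auto simp: atom_def)
  moreover have "restrict y F \<in> F \<rightarrow>\<^sub>E UNIV" by simp
  ultimately show ?thesis by (metis imageI)
qed

lemma join_part_cell_eq_atom: "U \<in> join_part F \<Longrightarrow> y \<in> U \<Longrightarrow> U = atom F y"
  unfolding join_part_def atom_def by auto

lemma join_part_finite_partition:
  assumes "finite F" "sets M = sets seq_space"
  shows "finite_partition M (join_part F :: (int \<Rightarrow> 'a::finite) set set)"
proof -
  have "finite (join_part F :: (int \<Rightarrow> 'a) set set)"
    unfolding join_part_def using assms(1) by (intro finite_imageI finite_PiE) auto
  moreover have "join_part F \<subseteq> sets M"
    unfolding join_part_def assms(2) using atom_in_sets[OF assms(1)] by (auto simp: atom_def)
  moreover have "disjoint (join_part F)"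
    unfolding disjoint_def using join_part_cell_eq_atom by blast
  moreover have "\<Union>(join_part F) = space M"
    using atom_in_join_part[of F] sets_eq_imp_space_eq[OF assms(2)]
    by (auto simp: atom_def space_seq_space)
  ultimately show ?thesis by (simp add: finite_partition_def)
qed

section \<open>Gibbs measures on subshifts of finite type\<close>

lemma SFT_translate_closed:
  assumes "is_SFT Y" "y \<in> Y"
  shows "translate a y \<in> Y"
proof -
  from assms(1) obtain L Fb where Y: "Y = {y. \<forall>m::int. map (\<lambda>i. y (m + int i)) [0..<L] \<notin> Fb}"
    unfolding is_SFT_def by blast
  have words: "map (\<lambda>i. y (m + int i)) [0..<L] \<notin> Fb" for m using assms(2) Y by blast
  have "map (\<lambda>i. translate a y (m + int i)) [0..<L] \<notin> Fb" for m
    using words[of "m + a"] by (simp add: translate_def algebra_simps)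
  then show ?thesis using Y by blast
qed

lemma gibbs_measureD:
  assumes "gibbs_measure Y \<phi> \<nu>"
  shows "sets \<nu> = sets seq_space" and "prob_space \<nu>" and "AE y in \<nu>. y \<in> Y"
    and "\<forall>B\<in>sets \<nu>. emeasure \<nu> (shift -` B \<inter> space \<nu>) = emeasure \<nu> B"
    and "space \<nu> = UNIV"
proof -
  note parts = assms[unfolded gibbs_measure_def]
  show sets: "sets \<nu> = sets seq_space" by (rule conjunct1[OF parts])
  show "prob_space \<nu>" by (rule conjunct1[OF conjunct2[OF parts]])
  show "AE y in \<nu>. y \<in> Y" by (rule conjunct1[OF conjunct2[OF conjunct2[OF parts]]])
  show "\<forall>B\<in>sets \<nu>. emeasure \<nu> (shift -` B \<inter> space \<nu>) = emeasure \<nu> B"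
    by (rule conjunct1[OF conjunct2[OF conjunct2[OF conjunct2[OF parts]]]])
  show "space \<nu> = UNIV" using sets_eq_imp_space_eq[OF sets] by (simp add: space_seq_space)
qed

lemma gibbs_cyl_invariant:
  assumes "gibbs_measure Y \<phi> \<nu>"
  shows "measure \<nu> (cyl w m) = measure \<nu> (cyl w 0)"
proof -
  have step: "measure \<nu> (cyl w (k + 1)) = measure \<nu> (cyl w k)" for k
  proof -
    have "shift -` cyl w k \<inter> space \<nu> = cyl w (k + 1)"
      using gibbs_measureD(5)[OF assms] by (auto simp: cyl_def shift_def algebra_simps)
    then show ?thesis
      using gibbs_measureD(1,4)[OF assms] cyl_in_sets[of w k] unfolding measure_def by metis
  qed
  show ?thesis
  proof (induction m rule: int_induct[where k = 0])
    case (step2 i) then show ?case using step[of "i - 1"] by simp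
  qed (use step in simp_all)
qed

definition birkhoff_sum :: "((int \<Rightarrow> 'a) \<Rightarrow> real) \<Rightarrow> int \<Rightarrow> int \<Rightarrow> (int \<Rightarrow> 'a) \<Rightarrow> real" where
  "birkhoff_sum \<phi> a b y = (\<Sum>j\<in>{a..<b}. \<phi> (translate j y))"

lemma birkhoff_sum_split:
  "a \<le> b \<Longrightarrow> b \<le> d \<Longrightarrow> birkhoff_sum \<phi> a d y = birkhoff_sum \<phi> a b y + birkhoff_sum \<phi> b d y"
proof -
  assume "a \<le> b" "b \<le> d"
  then have "{a..<d} = {a..<b} \<union> {b..<d}" by auto
  then show ?thesis unfolding birkhoff_sum_def by (simp add: sum.union_disjoint ivl_disj_int_two(3))
qed

lemma birkhoff_sum_funpow:
  "(\<Sum>k<n. \<phi> ((shift ^^ k) (translate a y))) = birkhoff_sum \<phi> a (a + int n) y"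
proof -
  have "bij_betw (\<lambda>k. a + int k) {..<n} {a..<a + int n}"
    by (rule bij_betwI[where g = "\<lambda>j. nat (j - a)"]) auto
  from sum.reindex_bij_betw[OF this, of "\<lambda>j. \<phi> (translate j y)"] show ?thesis
    by (simp add: birkhoff_sum_def funpow_shift translate_translate add.commute)
qed

lemma gibbs_interval_log_bounds:
  assumes gibbs: "gibbs_measure Y \<phi> \<nu>" and SFT: "is_SFT Y"
  shows "\<exists>c P. \<forall>y\<in>Y. \<forall>a b. a < b \<longrightarrow> 0 < measure \<nu> (atom {a..<b} y) \<and>
           \<bar>ln (measure \<nu> (atom {a..<b} y)) - (birkhoff_sum \<phi> a b y - of_int (b - a) * P)\<bar> \<le> ln c"
proof -
  from gibbs obtain c P where c: "c \<ge> 1" and gib: "\<And>y n. y \<in> Y \<Longrightarrow> n \<ge> 1 \<Longrightarrow>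
      exp (- real n * P + (\<Sum>k<n. \<phi> ((shift ^^ k) y))) / c
        \<le> measure \<nu> (cyl (map (\<lambda>i. y (int i)) [0..<n]) 0) \<and>
      measure \<nu> (cyl (map (\<lambda>i. y (int i)) [0..<n]) 0)
        \<le> c * exp (- real n * P + (\<Sum>k<n. \<phi> ((shift ^^ k) y)))"
    unfolding gibbs_measure_def Let_def by blast
  have "0 < measure \<nu> (atom {a..<b} y) \<and>
        \<bar>ln (measure \<nu> (atom {a..<b} y)) - (birkhoff_sum \<phi> a b y - of_int (b - a) * P)\<bar> \<le> ln c"
    if y: "y \<in> Y" and ab: "a < b" for y a b
  proof -
    define n where "n = nat (b - a)"
    define m where "m = measure \<nu> (atom {a..<b} y)"
    define e where "e = birkhoff_sum \<phi> a b y - of_int (b - a) * P"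
    have b: "b = a + int n" "n \<ge> 1" using ab by (auto simp: n_def)
    have m_cyl: "measure \<nu> (cyl (map (\<lambda>i. translate a y (int i)) [0..<n]) 0) = m"
      unfolding m_def b(1) atom_interval_eq_cyl by (rule gibbs_cyl_invariant[OF gibbs, symmetric])
    have exponent: "- real n * P + (\<Sum>k<n. \<phi> ((shift ^^ k) (translate a y))) = e"
      using birkhoff_sum_funpow[of \<phi> a y n] ab by (simp add: e_def n_def b(1)[symmetric] algebra_simps)
    have bounds: "exp e / c \<le> m" "m \<le> c * exp e"
      using gib[OF SFT_translate_closed[OF SFT y, of a] b(2), unfolded exponent m_cyl] by simp_all
    have m_pos: "0 < m" using bounds(1) c by (smt (verit) divide_pos_pos exp_gt_zero)
    have "e - ln c \<le> ln m"
      using bounds(1) c ln_mono[of "exp e / c" m] by (simp add: ln_div)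
    moreover have "ln m \<le> ln c + e"
      using bounds(2) c m_pos ln_mono[of m "c * exp e"] by (simp add: ln_mult)
    ultimately show ?thesis using m_pos unfolding m_def e_def by linarith
  qed
  then show ?thesis by blast
qed

text \<open>A Gibbs potential is bounded below on \<open>Y\<close>: the single-symbol atoms of positive
  measure form a finite set, so their measures are bounded away from zero.\<close>
lemma gibbs_potential_bounded_below:
  assumes gibbs: "gibbs_measure Y (\<phi> :: (int \<Rightarrow> 'a::finite) \<Rightarrow> real) \<nu>" and SFT: "is_SFT Y"
  shows "\<exists>B. \<forall>y\<in>Y. - \<phi> y \<le> B"
proof -
  from gibbs_interval_log_bounds[OF gibbs SFT] obtain c P where bnd_all:
      "\<forall>y\<in>Y. \<forall>a b. a < b \<longrightarrow> 0 < measure \<nu> (atom {a..<b} y) \<and>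
        \<bar>ln (measure \<nu> (atom {a..<b} y)) - (birkhoff_sum \<phi> a b y - of_int (b - a) * P)\<bar> \<le> ln c"
    by blast
  note bnd = bnd_all[rule_format]
  define S where "S = insert 1 {m \<in> measure \<nu> ` (join_part {0..<1} :: (int \<Rightarrow> 'a) set set). 0 < m}"
  have "finite_partition \<nu> (join_part {0..<1} :: (int \<Rightarrow> 'a) set set)"
    by (rule join_part_finite_partition) (simp_all add: gibbs_measureD(1)[OF gibbs])
  then have "finite S" by (simp add: S_def finite_partition_def)
  moreover have "S \<noteq> {}" by (simp add: S_def)
  ultimately have "Min S \<in> S" by (rule Min_in)
  then have \<mu>_pos: "0 < Min S" by (auto simp: S_def)
  have Min_le_S: "Min S \<le> m" if "m \<in> S" for m using \<open>finite S\<close> that by (rule Min_le)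
  have "- \<phi> y \<le> ln c - P - ln (Min S)" if y: "y \<in> Y" for y
  proof -
    have m: "0 < measure \<nu> (atom {0..<1} y)"
      "ln (measure \<nu> (atom {0..<1} y)) \<le> ln c + \<phi> y - P"
    proof -
      have "birkhoff_sum \<phi> 0 1 y = \<phi> y"
      proof -
        have "{0..<1::int} = {0}" by auto
        then show ?thesis by (simp add: birkhoff_sum_def translate_def)
      qed
      then show "0 < measure \<nu> (atom {0..<1} y)" "ln (measure \<nu> (atom {0..<1} y)) \<le> ln c + \<phi> y - P"
        using bnd[OF y, of 0 1] by (simp_all add: abs_le_iff)
    qed
    have "Min S \<le> measure \<nu> (atom {0..<1} y)"
    proof (rule Min_le_S)
      have "measure \<nu> (atom {0..<1} y) \<in> measure \<nu> ` join_part {0..<1}"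
        by (rule imageI[OF atom_in_join_part])
      with m(1) show "measure \<nu> (atom {0..<1} y) \<in> S" by (simp add: S_def)
    qed
    then have "ln (Min S) \<le> ln (measure \<nu> (atom {0..<1} y))" using \<mu>_pos by simp
    with m(2) show ?thesis by linarith
  qed
  then show ?thesis by blast
qed

text \<open>Given log-measures of interval atoms that follow
  Birkhoff sums up to \<open>ln c\<close>, for \<open>[a;e) = [a;d) \<union> [b;e)\<close> the sums over the non-overlapping
  parts cancel and only the overlap \<open>[b;d)\<close> survives.\<close>
lemma interval_log_ratio_bound:
  fixes lm :: "int \<Rightarrow> int \<Rightarrow> real"
  assumes approx: "\<And>s t. s < t \<Longrightarrow> \<bar>lm s t - (birkhoff_sum \<phi> s t y - of_int (t - s) * P)\<bar> \<le> ln c"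
    and "a \<le> b" "b \<le> d" "d \<le> e" "b < e" "a < d"
  shows "lm a e - lm b e - lm a d \<le> 3 * ln c + of_int (d - b) * P - birkhoff_sum \<phi> b d y"
proof -
  have "a < e" using assms by linarith
  have ae: "lm a e \<le> ln c + birkhoff_sum \<phi> a e y - of_int (e - a) * P"
    using approx[OF \<open>a < e\<close>] by (simp add: abs_le_iff)
  have be: "birkhoff_sum \<phi> b e y - of_int (e - b) * P - ln c \<le> lm b e"
    using approx[OF \<open>b < e\<close>] by (simp add: abs_le_iff)
  have ad: "birkhoff_sum \<phi> a d y - of_int (d - a) * P - ln c \<le> lm a d"
    using approx[OF \<open>a < d\<close>] by (simp add: abs_le_iff)
  have "birkhoff_sum \<phi> a e y = birkhoff_sum \<phi> a b y + birkhoff_sum \<phi> b e y"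
    "birkhoff_sum \<phi> a d y = birkhoff_sum \<phi> a b y + birkhoff_sum \<phi> b d y"
    using assms birkhoff_sum_split[of a b e \<phi> y] birkhoff_sum_split[of a b d \<phi> y] by auto
  moreover have "of_int (e - b) * P + of_int (d - a) * P - of_int (e - a) * P = of_int (d - b) * P"
    by (simp add: algebra_simps)
  ultimately show ?thesis using ae be ad by linarith
qed

text \<open>A set of positive measure contains a point of any almost-sure set; this is how the
  cells of positive measure are represented as atoms of points of \<open>Y\<close>.\<close>
lemma AE_point_in_positive_set:
  assumes "AE x in M. Q x" "A \<in> sets M" "0 < measure M A"
  obtains x where "x \<in> A" "Q x"
proof (rule ccontr)
  assume "\<not> thesis"
  with that have "AE x in M. Q x \<longrightarrow> x \<notin> A" by (intro AE_I2) blast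
  with assms(1) have ae: "AE x in M. x \<notin> A" by (rule AE_mp)
  have "{x \<in> space M. \<not> x \<notin> A} = A" using sets.sets_into_space[OF assms(2)] by auto
  from AE_iff_measurable[OF assms(2) this] ae have "emeasure M A = 0" by simp
  with assms(3) show False by (simp add: measure_def)
qed

lemma gibbs_cell_log_ratio_bound:
  assumes gibbs: "gibbs_measure Y (\<phi> :: (int \<Rightarrow> 'a::finite) \<Rightarrow> real) \<nu>" and SFT: "is_SFT Y"
    and p: "p \<ge> 0"
  shows "\<exists>K. \<forall>N U V. N \<ge> 1 \<longrightarrow> U \<in> join_part {-p..<N+p} \<longrightarrow> V \<in> join_part {-N-p..<p} \<longrightarrow>
           0 < measure \<nu> (U \<inter> V) \<longrightarrow> ln (measure \<nu> (U \<inter> V) / (measure \<nu> U * measure \<nu> V)) \<le> K"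
proof -
  from gibbs_interval_log_bounds[OF gibbs SFT] obtain c P where bnd_all:
      "\<forall>y\<in>Y. \<forall>a b. a < b \<longrightarrow> 0 < measure \<nu> (atom {a..<b} y) \<and>
        \<bar>ln (measure \<nu> (atom {a..<b} y)) - (birkhoff_sum \<phi> a b y - of_int (b - a) * P)\<bar> \<le> ln c"
    by blast
  note bnd = bnd_all[rule_format]
  from gibbs_potential_bounded_below[OF gibbs SFT] obtain B where B: "\<forall>y\<in>Y. - \<phi> y \<le> B"
    by blast
  note sets_\<nu> = gibbs_measureD(1)[OF gibbs] and AE_Y = gibbs_measureD(3)[OF gibbs]
  have "ln (measure \<nu> (U \<inter> V) / (measure \<nu> U * measure \<nu> V)) \<le> 3 * ln c + 2 * of_int p * (P + B)"
    if N: "N \<ge> 1" and U: "U \<in> join_part {-p..<N+p}" and V: "V \<in> join_part {-N-p..<p}"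
      and pos: "0 < measure \<nu> (U \<inter> V)" for N U V
  proof -
    have "finite_partition \<nu> (join_part {-p..<N+p})" "finite_partition \<nu> (join_part {-N-p..<p})"
      by (rule join_part_finite_partition, simp, rule sets_\<nu>)+
    then have "U \<in> sets \<nu>" "V \<in> sets \<nu>" using U V by (auto simp: finite_partition_def)
    then obtain y where y: "y \<in> U \<inter> V" "y \<in> Y"
      using AE_point_in_positive_set[OF AE_Y _ pos] by blast
    have cells: "U = atom {-p..<N+p} y" "V = atom {-N-p..<p} y"
      using join_part_cell_eq_atom[OF U] join_part_cell_eq_atom[OF V] y(1) by blast+
    have "{-p..<N+p} \<union> {-N-p..<p} = {-N-p..<N+p}" using N p by auto
    then have cell_UV: "U \<inter> V = atom {-N-p..<N+p} y" by (simp only: cells atom_Un)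
    define lm where "lm s t = ln (measure \<nu> (atom {s..<t} y))" for s t
    have approx: "\<bar>lm s t - (birkhoff_sum \<phi> s t y - of_int (t - s) * P)\<bar> \<le> ln c" if "s < t" for s t
      using bnd[OF y(2) that] by (simp add: lm_def)
    have "0 < measure \<nu> U" "0 < measure \<nu> V"
      using bnd[OF y(2), of "-p" "N+p"] bnd[OF y(2), of "-N-p" p] N p unfolding cells by auto
    with pos have "ln (measure \<nu> (U \<inter> V) / (measure \<nu> U * measure \<nu> V))
        = ln (measure \<nu> (U \<inter> V)) - ln (measure \<nu> U) - ln (measure \<nu> V)"
      by (simp add: ln_div ln_mult)
    also have "\<dots> = lm (-N-p) (N+p) - lm (-p) (N+p) - lm (-N-p) p"
      unfolding lm_def cell_UV by (simp only: cells)
    also have "\<dots> \<le> 3 * ln c + of_int (p - -p) * P - birkhoff_sum \<phi> (-p) p y"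
      by (rule interval_log_ratio_bound[OF approx]) (use N p in linarith)+
    finally have ratio: "ln (measure \<nu> (U \<inter> V) / (measure \<nu> U * measure \<nu> V))
        \<le> 3 * ln c + 2 * of_int p * P - birkhoff_sum \<phi> (-p) p y" by simp
    have "(\<Sum>j\<in>{-p..<p}. - \<phi> (translate j y)) \<le> of_nat (card {-p..<p}) * B"
      using B SFT_translate_closed[OF SFT y(2)] by (intro sum_bounded_above) simp
    then have "- birkhoff_sum \<phi> (-p) p y \<le> 2 * of_int p * B"
      using p by (simp add: birkhoff_sum_def sum_negf)
    with ratio show ?thesis by (simp add: algebra_simps)
  qed
  then show ?thesis by blast
qed

theorem mainTheorem13:
  fixes Y :: "(int \<Rightarrow> 'a::finite) set"
    and \<phi> :: "(int \<Rightarrow> 'a) \<Rightarrow> real"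
    and \<nu> :: "(int \<Rightarrow> 'a) measure"
    and p :: int
  assumes "is_SFT Y" and "top_mixing Y"
    and "holder_on Y \<phi>"
    and "gibbs_measure Y \<phi> \<nu>"
    and "p \<ge> 0"
  shows "\<exists>B::real. \<forall>N::int. N \<ge> 1 \<longrightarrow>
           mutual_info_part \<nu> (join_part {-p..<N+p}) (join_part {-N-p..<p}) \<le> B"
proof -
  from gibbs_cell_log_ratio_bound[OF assms(4,1,5)] obtain K where K:
      "\<forall>N U V. N \<ge> 1 \<longrightarrow> U \<in> join_part {-p..<N+p} \<longrightarrow> V \<in> join_part {-N-p..<p} \<longrightarrow>
        0 < measure \<nu> (U \<inter> V) \<longrightarrow> ln (measure \<nu> (U \<inter> V) / (measure \<nu> U * measure \<nu> V)) \<le> K"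
    by blast
  note sets = gibbs_measureD(1)[OF assms(4)]
  have "mutual_info_part \<nu> (join_part {-p..<N+p}) (join_part {-N-p..<p}) \<le> K" if "N \<ge> 1" for N
    by (rule mutual_info_part_le[OF gibbs_measureD(2)[OF assms(4)]
          join_part_finite_partition[OF _ sets] join_part_finite_partition[OF _ sets] K[rule_format, OF that]])
       simp_all
  then show ?thesis by blast
qed

end
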